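(* Let $\mathbb{X}\subseteq\mathbb{R}^{n_x}$, $\mathbb{U}\subseteq\mathbb{R}^{n_u}$ with $0<\mu_L(\mathbb{U})<\infty$, $T>0$ an integer, $p(x_0)$ an initial density, $p(x_{t+1}\mid x_t,u_t)$ transition densities, and $c_t:\mathbb{X}\times\mathbb{U}\to\mathbb{R}_{\ge0}$, $c_T:\mathbb{X}\to\mathbb{R}_{\ge0}$. For policies $\pi=\{\pi_s\}_{s=0}^{T-1}$ (each $\pi_s(\cdot\mid x)$ a probability density on $\mathbb{U}$) let $p^\pi(\tau)=p(x_0)\prod_{s=0}^{T-1}p(x_{s+1}\mid x_s,u_s)\pi_s(u_s\mid x_s)$, $\tau=(x_{0:T},u_{0:T-1})$, and let $p(\tau\mid\mathcal{O}_{0:T}=1)\propto p(x_0)\prod_{s=0}^{T-1}p(x_{s+1}\mid x_s,u_s)\exp(-c_T(x_T)-\sum_{s=0}^{T-1}c_s(x_s,u_s))$. Fix $t\in\{0,\dots,T-1\}$ and the factors $\pi_s$, $s\ne t$, and let $\eta>-1$, $\eta\ne0$. Then the optimal factor $\pi_t^\bullet:=\arg\min_{\pi_t}D_{1+\eta}(p^\pi\,\|\,p(\cdot\mid\mathcal{O}_{0:T}=1))$, where $\pi_t$ ranges over policies at time $t$, is given by $$\pi_t^\bullet(u_t\mid x_t)=\frac{1}{Z_t(x_t)}\Bigg(\mathbb{E}_{p^\pi(x_{t+1:T},u_{t+1:T-1}\mid x_t,u_t)}\Bigg[\Bigg(\frac{\prod_{s=t+1}^{T-1}\pi_s(u_s\mid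 x_s)}{p(\mathcal{O}_T=1\mid x_T)\prod_{s=t}^{T-1}p(\mathcal{O}_s=1\mid x_s,u_s)}\Bigg)^{\eta}\Bigg]\Bigg)^{-1/\eta},$$ where $Z_t(x_t)$ is the normalizing constant making this a probability density in $u_t$.
   Context: $p(\mathcal{O}_s=1\mid x_s,u_s)=\exp(-c_s(x_s,u_s))$ and $p(\mathcal{O}_T=1\mid x_T)=\exp(-c_T(x_T))$ (optimality variables of control as inference, with uniform control prior on $\mathbb{U}$). The R\'enyi divergence is $D_\alpha(p_1\|p_2)=\frac{1}{\alpha-1}\log\int_{\{p_1p_2>0\}}p_1^\alpha p_2^{1-\alpha}$ for $\alpha>0$, $\alpha\ne1$. $p^\pi(x_{t+1:T},u_{t+1:T-1}\mid x_t,u_t)$ is the conditional density under $p^\pi$. *)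

theory Defs
  imports "HOL-Probability.Probability"
begin

definition elog :: "ennreal \<Rightarrow> ereal" where
  "elog x = (if x = 0 then -\<infinity> else if x = \<infinity> then \<infinity> else ereal (ln (enn2real x)))"

definition renyi_div :: "'a measure \<Rightarrow> real \<Rightarrow> ('a \<Rightarrow> real) \<Rightarrow> ('a \<Rightarrow> real) \<Rightarrow> ereal" where
  "renyi_div M \<alpha> p1 p2 = ereal (1 / (\<alpha> - 1)) *
     elog (\<integral>\<^sup>+ z. indicator {z. p1 z * p2 z > 0} z * ennreal (p1 z powr \<alpha> * p2 z powr (1 - \<alpha>)) \<partial>M)"

definition is_policy :: "'x set \<Rightarrow> 'u set \<Rightarrow> 'x measure \<Rightarrow> 'u measure \<Rightarrow> ('x \<Rightarrow> 'u \<Rightarrow> real) \<Rightarrow> bool" where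
  "is_policy X U MX MU f \<longleftrightarrow>
     (\<lambda>z. f (fst z) (snd z)) \<in> borel_measurable (MX \<Otimes>\<^sub>M MU) \<and>
     (\<forall>x\<in>X. \<forall>u\<in>U. 0 \<le> f x u) \<and>
     (\<forall>x\<in>X. (\<integral>\<^sup>+ u. ennreal (f x u) \<partial>MU) = 1)"

definition traj_space :: "'x measure \<Rightarrow> 'u measure \<Rightarrow> nat \<Rightarrow> ((nat \<Rightarrow> 'x) \<times> (nat \<Rightarrow> 'u)) measure" where
  "traj_space MX MU T = (\<Pi>\<^sub>M s\<in>{0..T}. MX) \<Otimes>\<^sub>M (\<Pi>\<^sub>M s\<in>{0..<T}. MU)"

definition traj_dens :: "('x \<Rightarrow> real) \<Rightarrow> ('x \<Rightarrow> 'u \<Rightarrow> 'x \<Rightarrow> real) \<Rightarrow> nat \<Rightarrow>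
    (nat \<Rightarrow> 'x \<Rightarrow> 'u \<Rightarrow> real) \<Rightarrow> (nat \<Rightarrow> 'x) \<times> (nat \<Rightarrow> 'u) \<Rightarrow> real" where
  "traj_dens p0 P T pol \<tau> =
     p0 (fst \<tau> 0) * (\<Prod>s<T. P (fst \<tau> s) (snd \<tau> s) (fst \<tau> (Suc s)) * pol s (fst \<tau> s) (snd \<tau> s))"

definition post_unnorm :: "('x \<Rightarrow> real) \<Rightarrow> ('x \<Rightarrow> 'u \<Rightarrow> 'x \<Rightarrow> real) \<Rightarrow> nat \<Rightarrow>
    (nat \<Rightarrow> 'x \<Rightarrow> 'u \<Rightarrow> real) \<Rightarrow> ('x \<Rightarrow> real) \<Rightarrow> (nat \<Rightarrow> 'x) \<times> (nat \<Rightarrow> 'u) \<Rightarrow> real" where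
  "post_unnorm p0 P T c cT \<tau> =
     p0 (fst \<tau> 0) * (\<Prod>s<T. P (fst \<tau> s) (snd \<tau> s) (fst \<tau> (Suc s))) *
     exp (- cT (fst \<tau> T) - (\<Sum>s<T. c s (fst \<tau> s) (snd \<tau> s)))"

definition posterior :: "'x measure \<Rightarrow> 'u measure \<Rightarrow> ('x \<Rightarrow> real) \<Rightarrow> ('x \<Rightarrow> 'u \<Rightarrow> 'x \<Rightarrow> real) \<Rightarrow> nat \<Rightarrow>
    (nat \<Rightarrow> 'x \<Rightarrow> 'u \<Rightarrow> real) \<Rightarrow> ('x \<Rightarrow> real) \<Rightarrow> (nat \<Rightarrow> 'x) \<times> (nat \<Rightarrow> 'u) \<Rightarrow> real" where
  "posterior MX MU p0 P T c cT \<tau> =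
     post_unnorm p0 P T c cT \<tau> /
     enn2real (\<integral>\<^sup>+ \<sigma>. ennreal (post_unnorm p0 P T c cT \<sigma>) \<partial>traj_space MX MU T)"

definition suffix_space :: "'x measure \<Rightarrow> 'u measure \<Rightarrow> nat \<Rightarrow> nat \<Rightarrow> ((nat \<Rightarrow> 'x) \<times> (nat \<Rightarrow> 'u)) measure" where
  "suffix_space MX MU T t = (\<Pi>\<^sub>M s\<in>{Suc t..T}. MX) \<Otimes>\<^sub>M (\<Pi>\<^sub>M s\<in>{Suc t..<T}. MU)"

text \<open>Integrand of E_{p^pi(x_{t+1:T},u_{t+1:T-1} | x_t = a, u_t = b)}[ (ratio)^eta ]:
  conditional density of the future times the ratio to the power eta, where
  ratio = prod_{s=t+1}^{T-1} pi_s(u_s|x_s) / (p(O_T=1|x_T) prod_{s=t}^{T-1} p(O_s=1|x_s,u_s)).\<close>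
definition cond_integrand :: "('x \<Rightarrow> 'u \<Rightarrow> 'x \<Rightarrow> real) \<Rightarrow> nat \<Rightarrow> (nat \<Rightarrow> 'x \<Rightarrow> 'u \<Rightarrow> real) \<Rightarrow>
    ('x \<Rightarrow> real) \<Rightarrow> (nat \<Rightarrow> 'x \<Rightarrow> 'u \<Rightarrow> real) \<Rightarrow> real \<Rightarrow> nat \<Rightarrow> 'x \<Rightarrow> 'u \<Rightarrow>
    (nat \<Rightarrow> 'x) \<times> (nat \<Rightarrow> 'u) \<Rightarrow> real" where
  "cond_integrand P T c cT pol \<eta> t a b \<sigma> =
     (let xs = (fst \<sigma>)(t := a); us = (snd \<sigma>)(t := b) in
       ((\<Prod>s\<in>{t..<T}. P (xs s) (us s) (xs (Suc s))) * (\<Prod>s\<in>{Suc t..<T}. pol s (xs s) (us s))) *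
       (((\<Prod>s\<in>{Suc t..<T}. pol s (xs s) (us s)) /
         (exp (- cT (xs T)) * (\<Prod>s\<in>{t..<T}. exp (- c s (xs s) (us s))))) powr \<eta>))"

definition cond_weight :: "'x measure \<Rightarrow> 'u measure \<Rightarrow> ('x \<Rightarrow> 'u \<Rightarrow> 'x \<Rightarrow> real) \<Rightarrow> nat \<Rightarrow>
    (nat \<Rightarrow> 'x \<Rightarrow> 'u \<Rightarrow> real) \<Rightarrow> ('x \<Rightarrow> real) \<Rightarrow> (nat \<Rightarrow> 'x \<Rightarrow> 'u \<Rightarrow> real) \<Rightarrow> real \<Rightarrow> nat \<Rightarrow>
    'x \<Rightarrow> 'u \<Rightarrow> ennreal" where
  "cond_weight MX MU P T c cT pol \<eta> t a b =
     (\<integral>\<^sup>+ \<sigma>. ennreal (cond_integrand P T c cT pol \<eta> t a b \<sigma>) \<partial>suffix_space MX MU T t)"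

definition opt_unnorm :: "'x measure \<Rightarrow> 'u measure \<Rightarrow> ('x \<Rightarrow> 'u \<Rightarrow> 'x \<Rightarrow> real) \<Rightarrow> nat \<Rightarrow>
    (nat \<Rightarrow> 'x \<Rightarrow> 'u \<Rightarrow> real) \<Rightarrow> ('x \<Rightarrow> real) \<Rightarrow> (nat \<Rightarrow> 'x \<Rightarrow> 'u \<Rightarrow> real) \<Rightarrow> real \<Rightarrow> nat \<Rightarrow>
    'x \<Rightarrow> 'u \<Rightarrow> real" where
  "opt_unnorm MX MU P T c cT pol \<eta> t a b =
     enn2real (cond_weight MX MU P T c cT pol \<eta> t a b) powr (- 1 / \<eta>)"

definition opt_normalizer :: "'x measure \<Rightarrow> 'u measure \<Rightarrow> ('x \<Rightarrow> 'u \<Rightarrow> 'x \<Rightarrow> real) \<Rightarrow> nat \<Rightarrow>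
    (nat \<Rightarrow> 'x \<Rightarrow> 'u \<Rightarrow> real) \<Rightarrow> ('x \<Rightarrow> real) \<Rightarrow> (nat \<Rightarrow> 'x \<Rightarrow> 'u \<Rightarrow> real) \<Rightarrow> real \<Rightarrow> nat \<Rightarrow>
    'x \<Rightarrow> ennreal" where
  "opt_normalizer MX MU P T c cT pol \<eta> t a =
     (\<integral>\<^sup>+ b. ennreal (opt_unnorm MX MU P T c cT pol \<eta> t a b) \<partial>MU)"

definition opt_factor :: "'x measure \<Rightarrow> 'u measure \<Rightarrow> ('x \<Rightarrow> 'u \<Rightarrow> 'x \<Rightarrow> real) \<Rightarrow> nat \<Rightarrow>
    (nat \<Rightarrow> 'x \<Rightarrow> 'u \<Rightarrow> real) \<Rightarrow> ('x \<Rightarrow> real) \<Rightarrow> (nat \<Rightarrow> 'x \<Rightarrow> 'u \<Rightarrow> real) \<Rightarrow> real \<Rightarrow> nat \<Rightarrow>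
    'x \<Rightarrow> 'u \<Rightarrow> real" where
  "opt_factor MX MU P T c cT pol \<eta> t a b =
     opt_unnorm MX MU P T c cT pol \<eta> t a b / enn2real (opt_normalizer MX MU P T c cT pol \<eta> t a)"

end

theory Submission
  imports Defs
begin

text \<open>
  The Renyi divergence of order \<open>1 + \<eta>\<close> is \<open>(1/\<eta>) log I\<close>, where \<open>I\<close> is the integral of
  \<open>(p\<^sup>\<pi>)^(1+\<eta>) p(\<tau> | O)^(-\<eta>)\<close> over trajectories. The initial and transition densities are
  common factors of both densities and cancel up to a power of the evidence \<open>Z\<close>; the remaining
  factors separate at time \<open>t\<close>, so splitting a trajectory into past, action \<open>u\<^sub>t\<close> and future and
  integrating out the future (Fubini) gives \<open>I = Z^\<eta> \<integral> g(past) \<integral> \<pi>\<^sub>t(u | x\<^sub>t)^(1+\<eta>) W(x\<^sub>t, u) du\<close>,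
  where \<open>W\<close> is the conditional expectation of the statement. For fixed \<open>x\<^sub>t\<close> the density \<open>q\<close>
  proportional to \<open>W^(-1/\<eta>)\<close> makes \<open>q^\<eta> W\<close> constant; integrating the tangent-line inequality of
  the convex (\<open>\<eta> > 0\<close>) or concave (\<open>-1 < \<eta> < 0\<close>) map \<open>y \<mapsto> y^(1+\<eta>)\<close> at \<open>q\<close> against \<open>W\<close>
  shows that \<open>q\<close> minimises, respectively maximises, the inner integral among probability densities.
  Because of the sign of \<open>1/\<eta>\<close>, \<open>q\<close> minimises the divergence in both cases.
\<close>

section \<open>Elementary inequalities\<close>

lemma powr_convex_tangent:
  fixes x y \<eta> :: real
  assumes "0 \<le> x" "0 < y" "0 < \<eta>"
  shows "(1 + \<eta>) * x * y powr \<eta> \<le> x powr (1 + \<eta>) + \<eta> * y powr (1 + \<eta>)"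
proof (cases "x = 0")
  case True
  then show ?thesis using assms by simp
next
  case False
  then have x: "0 < x" using assms by simp
  have "(x powr (1 + \<eta>)) powr (1 / (1 + \<eta>)) * (y powr (1 + \<eta>)) powr (\<eta> / (1 + \<eta>))
     \<le> (1 / (1 + \<eta>)) * x powr (1 + \<eta>) + (\<eta> / (1 + \<eta>)) * y powr (1 + \<eta>)"
    using assms x by (intro Youngs_inequality_0) (auto simp: field_simps)
  moreover have "(x powr (1 + \<eta>)) powr (1 / (1 + \<eta>)) = x"
    using x assms by (simp add: powr_powr)
  moreover have "(y powr (1 + \<eta>)) powr (\<eta> / (1 + \<eta>)) = y powr \<eta>"
    using assms by (simp add: powr_powr)
  ultimately have "x * y powr \<eta> \<le> (x powr (1 + \<eta>) + \<eta> * y powr (1 + \<eta>)) / (1 + \<eta>)"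
    by (simp add: add_divide_distrib)
  then show ?thesis using assms by (simp add: field_simps)
qed

lemma powr_concave_tangent:
  fixes x y \<eta> :: real
  assumes "0 \<le> x" "0 < y" "- 1 < \<eta>" "\<eta> < 0"
  shows "x powr (1 + \<eta>) \<le> (1 + \<eta>) * x * y powr \<eta> - \<eta> * y powr (1 + \<eta>)"
proof (cases "x = 0")
  case True
  then show ?thesis using assms by (simp add: mult_nonpos_nonneg)
next
  case False
  then have x: "0 < x" using assms by simp
  have "x powr (1 + \<eta>) * y powr (- \<eta>) \<le> (1 + \<eta>) * x + (- \<eta>) * y"
    using assms x by (intro Youngs_inequality_0) auto
  then have "x powr (1 + \<eta>) * (y powr (- \<eta>) * y powr \<eta>) \<le> ((1 + \<eta>) * x + (- \<eta>) * y) * y powr \<eta>"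
    unfolding mult.assoc[symmetric] by (rule mult_right_mono) simp
  moreover have "y powr (- \<eta>) * y powr \<eta> = 1"
    using assms by (simp add: powr_add[symmetric])
  moreover have "((1 + \<eta>) * x + (- \<eta>) * y) * y powr \<eta> = (1 + \<eta>) * x * y powr \<eta> - \<eta> * y powr (1 + \<eta>)"
    using assms by (simp add: powr_mult_base algebra_simps)
  ultimately show ?thesis by simp
qed

lemma powr_shared_factor_cancel:
  fixes A B E Z \<eta> :: real
  assumes "0 \<le> A" "0 \<le> B" "0 < Z"
  shows "(A * B) powr (1 + \<eta>) * (A * exp E / Z) powr (- \<eta>)
    = Z powr \<eta> * (A * B powr (1 + \<eta>) * exp (- \<eta> * E))"
proof -
  have "(A * B) powr (1 + \<eta>) * (A * exp E / Z) powr (- \<eta>)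
      = A powr (1 + \<eta> + - \<eta>) * B powr (1 + \<eta>) * exp E powr (- \<eta>) * Z powr \<eta>"
    using assms by (simp add: powr_mult powr_divide powr_minus_divide powr_add)
  also have "\<dots> = Z powr \<eta> * (A * B powr (1 + \<eta>) * exp (- \<eta> * E))"
    using assms by (simp add: exp_powr_real algebra_simps)
  finally show ?thesis .
qed

lemma prod_lessThan_split_at:
  fixes f :: "nat \<Rightarrow> 'a::comm_monoid_mult"
  assumes "t < T"
  shows "(\<Prod>s<T. f s) = (\<Prod>s<t. f s) * f t * (\<Prod>s\<in>{Suc t..<T}. f s)"
proof -
  have "{..<T} = {..<Suc t} \<union> {Suc t..<T}" using assms by auto
  then show ?thesis by (simp add: prod.union_disjoint ivl_disj_int)
qed

lemma sum_lessThan_split_at: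
  fixes f :: "nat \<Rightarrow> 'a::comm_monoid_add"
  assumes "t < T"
  shows "(\<Sum>s<T. f s) = (\<Sum>s<t. f s) + f t + (\<Sum>s\<in>{Suc t..<T}. f s)"
proof -
  have "{..<T} = {..<Suc t} \<union> {Suc t..<T}" using assms by auto
  then show ?thesis by (simp add: sum.union_disjoint ivl_disj_int)
qed

lemma elog_mono:
  assumes "x \<le> y"
  shows "elog x \<le> elog y"
proof (cases "x = 0 \<or> y = \<infinity>")
  case True
  then show ?thesis by (auto simp: elog_def)
next
  case False
  then have "x \<noteq> 0" "y \<noteq> \<infinity>" by auto
  moreover from this assms have "y \<noteq> 0" "x \<noteq> \<infinity>"
    by (auto simp: top_unique)
  moreover from calculation have "0 < enn2real x"
    by (simp add: enn2real_positive_iff less_top zero_less_iff_neq_zero)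
  moreover have "enn2real x \<le> enn2real y"
    using assms \<open>y \<noteq> \<infinity>\<close> by (intro enn2real_mono) (auto simp: less_top)
  ultimately show ?thesis by (simp add: elog_def)
qed

lemma elog_scaled_le:
  fixes \<eta> :: real
  assumes "\<eta> \<noteq> 0" and "0 < \<eta> \<Longrightarrow> I \<le> J" and "\<eta> < 0 \<Longrightarrow> J \<le> I"
  shows "ereal (1 / \<eta>) * elog I \<le> ereal (1 / \<eta>) * elog J"
proof (cases "0 < \<eta>")
  case True
  then show ?thesis using assms by (intro ereal_mult_left_mono elog_mono) auto
next
  case False
  then have "\<eta> < 0" using assms(1) by simp
  have neg: "ereal (1 / \<eta>) * z = - (ereal (- 1 / \<eta>) * z)" for z
    by (cases z) (auto simp: divide_simps)
  have "ereal (- 1 / \<eta>) * elog J \<le> ereal (- 1 / \<eta>) * elog I"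
    using \<open>\<eta> < 0\<close> assms by (intro ereal_mult_left_mono elog_mono) (auto simp: divide_simps)
  then show ?thesis unfolding neg by simp
qed

section \<open>Weighted power integrals of probability densities\<close>

lemma nn_integral_lincomb_densities:
  fixes q y :: "'a \<Rightarrow> real"
  assumes [measurable]: "q \<in> borel_measurable M" "y \<in> borel_measurable M"
    and "\<forall>b\<in>space M. 0 \<le> q b" "\<forall>b\<in>space M. 0 \<le> y b"
    and "(\<integral>\<^sup>+b. ennreal (q b) \<partial>M) = 1" "(\<integral>\<^sup>+b. ennreal (y b) \<partial>M) = 1"
    and "0 \<le> r" "0 \<le> r'"
  shows "(\<integral>\<^sup>+b. ennreal (r * q b + r' * y b) \<partial>M) = ennreal (r + r')"
proof -
  have "(\<integral>\<^sup>+b. ennreal (r * q b + r' * y b) \<partial>M)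
      = (\<integral>\<^sup>+b. ennreal r * ennreal (q b) + ennreal r' * ennreal (y b) \<partial>M)"
    using assms by (intro nn_integral_cong) (simp add: ennreal_mult' ennreal_plus[symmetric])
  also have "\<dots> = ennreal r * (\<integral>\<^sup>+b. ennreal (q b) \<partial>M) + ennreal r' * (\<integral>\<^sup>+b. ennreal (y b) \<partial>M)"
    by (simp add: nn_integral_add nn_integral_cmult)
  finally show ?thesis using assms by simp
qed

lemma balanced_density_cost:
  fixes y w :: "'a \<Rightarrow> real" and \<eta> k :: real
  assumes [measurable]: "y \<in> borel_measurable M"
    and y_pos: "\<forall>b\<in>space M. 0 < y b" and y_dens: "(\<integral>\<^sup>+b. ennreal (y b) \<partial>M) = 1"
    and w_nonneg: "\<forall>b\<in>space M. 0 \<le> w b" and balanced: "\<forall>b\<in>space M. y b powr \<eta> * w b = k"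
  shows "0 \<le> k"
    and tilted: "\<And>b. b \<in> space M \<Longrightarrow> y b powr (1 + \<eta>) * w b = k * y b"
    and "(\<integral>\<^sup>+b. ennreal (y b powr (1 + \<eta>) * w b) \<partial>M) = ennreal k"
proof -
  obtain b0 where "b0 \<in> space M"
    using y_dens nn_integral_empty by fastforce
  then show k: "0 \<le> k"
    using balanced y_pos w_nonneg by force
  show tilted: "y b powr (1 + \<eta>) * w b = k * y b" if "b \<in> space M" for b
  proof -
    have "y b powr (1 + \<eta>) = y b * y b powr \<eta>"
      using y_pos that by (simp add: powr_add less_imp_le)
    then show ?thesis using balanced that by (simp add: algebra_simps)
  qed
  have "(\<integral>\<^sup>+b. ennreal (y b powr (1 + \<eta>) * w b) \<partial>M) = (\<integral>\<^sup>+b. ennreal k * ennreal (y b) \<partial>M)"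
    using tilted k by (intro nn_integral_cong) (simp add: ennreal_mult')
  then show "(\<integral>\<^sup>+b. ennreal (y b powr (1 + \<eta>) * w b) \<partial>M) = ennreal k"
    by (simp add: nn_integral_cmult y_dens)
qed

lemma powr_weight_integral_convex_min:
  fixes q y w :: "'a \<Rightarrow> real" and \<eta> k :: real
  assumes [measurable]: "q \<in> borel_measurable M" "y \<in> borel_measurable M" "w \<in> borel_measurable M"
    and q_nonneg: "\<forall>b\<in>space M. 0 \<le> q b" and y_pos: "\<forall>b\<in>space M. 0 < y b"
    and w_nonneg: "\<forall>b\<in>space M. 0 \<le> w b"
    and q_dens: "(\<integral>\<^sup>+b. ennreal (q b) \<partial>M) = 1" and y_dens: "(\<integral>\<^sup>+b. ennreal (y b) \<partial>M) = 1"
    and balanced: "\<forall>b\<in>space M. y b powr \<eta> * w b = k" and "0 < \<eta>"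
  shows "(\<integral>\<^sup>+b. ennreal (y b powr (1 + \<eta>) * w b) \<partial>M) \<le> (\<integral>\<^sup>+b. ennreal (q b powr (1 + \<eta>) * w b) \<partial>M)"
proof -
  note cost = balanced_density_cost[OF assms(2) y_pos y_dens w_nonneg balanced]
  define I where "I = (\<integral>\<^sup>+b. ennreal (q b powr (1 + \<eta>) * w b) \<partial>M)"
  have "ennreal ((1 + \<eta>) * k) = (\<integral>\<^sup>+b. ennreal ((1 + \<eta>) * k) * ennreal (q b) \<partial>M)"
    by (simp add: nn_integral_cmult q_dens)
  also have "\<dots> \<le> (\<integral>\<^sup>+b. ennreal (q b powr (1 + \<eta>) * w b) + ennreal (\<eta> * k) * ennreal (y b) \<partial>M)"
  proof (intro nn_integral_mono)
    fix b assume b: "b \<in> space M"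
    have "(1 + \<eta>) * q b * y b powr \<eta> * w b \<le> (q b powr (1 + \<eta>) + \<eta> * y b powr (1 + \<eta>)) * w b"
      using powr_convex_tangent[of "q b" "y b" \<eta>] q_nonneg y_pos w_nonneg b \<open>0 < \<eta>\<close>
      by (intro mult_right_mono) auto
    then have "(1 + \<eta>) * k * q b \<le> q b powr (1 + \<eta>) * w b + \<eta> * k * y b"
      using balanced cost(2)[OF b] b by (simp add: algebra_simps)
    moreover have "0 \<le> q b powr (1 + \<eta>) * w b" "0 \<le> \<eta> * k * y b"
      using cost(1) \<open>0 < \<eta>\<close> y_pos w_nonneg b by (auto simp: less_imp_le)
    ultimately show "ennreal ((1 + \<eta>) * k) * ennreal (q b)
        \<le> ennreal (q b powr (1 + \<eta>) * w b) + ennreal (\<eta> * k) * ennreal (y b)"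
      using cost(1) \<open>0 < \<eta>\<close> y_pos b
      by (simp add: ennreal_mult'[symmetric] ennreal_plus[symmetric] ennreal_leI del: ennreal_plus)
  qed
  also have "\<dots> = I + ennreal (\<eta> * k)"
    by (simp add: I_def nn_integral_add nn_integral_cmult y_dens)
  finally have "ennreal k + ennreal (\<eta> * k) \<le> I + ennreal (\<eta> * k)"
    using cost(1) \<open>0 < \<eta>\<close> by (simp add: distrib_right ennreal_plus)
  then show ?thesis
    unfolding cost(3) I_def[symmetric] by (simp add: add.commute[of _ "ennreal (\<eta> * k)"])
qed

lemma powr_weight_integral_concave_max:
  fixes q y w :: "'a \<Rightarrow> real" and \<eta> k :: real
  assumes [measurable]: "q \<in> borel_measurable M" "y \<in> borel_measurable M" "w \<in> borel_measurable M"
    and q_nonneg: "\<forall>b\<in>space M. 0 \<le> q b" and y_pos: "\<forall>b\<in>space M. 0 < y b"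
    and w_nonneg: "\<forall>b\<in>space M. 0 \<le> w b"
    and q_dens: "(\<integral>\<^sup>+b. ennreal (q b) \<partial>M) = 1" and y_dens: "(\<integral>\<^sup>+b. ennreal (y b) \<partial>M) = 1"
    and balanced: "\<forall>b\<in>space M. y b powr \<eta> * w b = k" and eta: "- 1 < \<eta>" "\<eta> < 0"
  shows "(\<integral>\<^sup>+b. ennreal (q b powr (1 + \<eta>) * w b) \<partial>M) \<le> (\<integral>\<^sup>+b. ennreal (y b powr (1 + \<eta>) * w b) \<partial>M)"
proof -
  note cost = balanced_density_cost[OF assms(2) y_pos y_dens w_nonneg balanced]
  have "(\<integral>\<^sup>+b. ennreal (q b powr (1 + \<eta>) * w b) \<partial>M)
      \<le> (\<integral>\<^sup>+b. ennreal ((1 + \<eta>) * k * q b + (- \<eta> * k) * y b) \<partial>M)"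
  proof (intro nn_integral_mono ennreal_leI)
    fix b assume b: "b \<in> space M"
    have "q b powr (1 + \<eta>) * w b \<le> ((1 + \<eta>) * q b * y b powr \<eta> - \<eta> * y b powr (1 + \<eta>)) * w b"
      using powr_concave_tangent[of "q b" "y b" \<eta>] q_nonneg y_pos w_nonneg b eta
      by (intro mult_right_mono) auto
    then show "q b powr (1 + \<eta>) * w b \<le> (1 + \<eta>) * k * q b + (- \<eta> * k) * y b"
      using balanced cost(2)[OF b] b by (simp add: algebra_simps)
  qed
  also have "\<dots> = ennreal ((1 + \<eta>) * k + (- \<eta> * k))"
    using eta cost(1) q_nonneg y_pos q_dens y_dens
    by (intro nn_integral_lincomb_densities) (auto simp: less_imp_le mult_nonpos_nonneg)
  finally show ?thesis
    unfolding cost(3) by (simp add: algebra_simps)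
qed

lemma nn_integral_pos_of_pos:
  fixes f :: "'a \<Rightarrow> ennreal"
  assumes f: "f \<in> borel_measurable M" and pos: "\<forall>x\<in>space M. 0 < f x"
    and nonnull: "emeasure M (space M) \<noteq> 0"
  shows "0 < integral\<^sup>N M f"
proof (rule ccontr)
  assume "\<not> 0 < integral\<^sup>N M f"
  then have "AE x in M. f x = 0"
    using nn_integral_0_iff_AE[OF f] by (simp add: not_gr_zero)
  then have "AE x in M. False"
    by (rule AE_mp) (use pos in \<open>auto intro!: AE_I2\<close>)
  then show False
    using nonnull ae_filter_eq_bot_iff trivial_limit_def by metis
qed

section \<open>Integrals over pairs of finite product spaces\<close>

lemma nn_integral_pair_PiM_iterated:
  fixes M :: "'i \<Rightarrow> 'a measure" and N :: "'i \<Rightarrow> 'b measure"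
  assumes M: "product_sigma_finite M" and N: "product_sigma_finite N"
    and fin: "finite I" "finite J" "finite K" "finite L"
    and disj: "I \<inter> J = {}" "K \<inter> L = {}"
    and F[measurable]: "F \<in> borel_measurable (PiM (I \<union> J) M \<Otimes>\<^sub>M PiM (K \<union> L) N)"
  shows "(\<integral>\<^sup>+z. F z \<partial>(PiM (I \<union> J) M \<Otimes>\<^sub>M PiM (K \<union> L) N)) =
    (\<integral>\<^sup>+x. \<integral>\<^sup>+x'. \<integral>\<^sup>+u. \<integral>\<^sup>+u'. F (merge I J (x, x'), merge K L (u, u'))
       \<partial>PiM L N \<partial>PiM K N \<partial>PiM J M \<partial>PiM I M)"
proof -
  interpret KL: sigma_finite_measure "PiM (K \<union> L) N"
    using fin by (intro product_sigma_finite.sigma_finite[OF N]) auto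
  have "(\<integral>\<^sup>+z. F z \<partial>(PiM (I \<union> J) M \<Otimes>\<^sub>M PiM (K \<union> L) N)) =
      (\<integral>\<^sup>+x. \<integral>\<^sup>+u. F (x, u) \<partial>PiM (K \<union> L) N \<partial>PiM (I \<union> J) M)"
    by (rule KL.nn_integral_fst[symmetric]) simp
  also have "\<dots> = (\<integral>\<^sup>+x. \<integral>\<^sup>+x'. \<integral>\<^sup>+u. F (merge I J (x, x'), u) \<partial>PiM (K \<union> L) N \<partial>PiM J M \<partial>PiM I M)"
    using fin disj
    by (intro product_sigma_finite.product_nn_integral_fold[OF M] KL.borel_measurable_nn_integral_fst)
      simp_all
  also have "\<dots> = (\<integral>\<^sup>+x. \<integral>\<^sup>+x'. \<integral>\<^sup>+u. \<integral>\<^sup>+u'. F (merge I J (x, x'), merge K L (u, u'))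
       \<partial>PiM L N \<partial>PiM K N \<partial>PiM J M \<partial>PiM I M)"
  proof (intro nn_integral_cong)
    fix x x' assume "x \<in> space (PiM I M)" "x' \<in> space (PiM J M)"
    then have "merge I J (x, x') \<in> space (PiM (I \<union> J) M)"
      using measurable_space[OF measurable_merge[of I J M], of "(x, x')"] by (simp add: space_pair_measure)
    then show "(\<integral>\<^sup>+u. F (merge I J (x, x'), u) \<partial>PiM (K \<union> L) N) =
        (\<integral>\<^sup>+u. \<integral>\<^sup>+u'. F (merge I J (x, x'), merge K L (u, u')) \<partial>PiM L N \<partial>PiM K N)"
      using fin disj
      by (intro product_sigma_finite.product_nn_integral_fold[OF N] measurable_compose_Pair1[OF _ F])
        simp_all
  qed
  finally show ?thesis .
qed

lemma nn_integral_pair_PiM_split: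
  fixes M :: "'i \<Rightarrow> 'a measure" and N :: "'i \<Rightarrow> 'b measure"
  assumes M: "product_sigma_finite M" and N: "product_sigma_finite N"
    and fin: "finite I" "finite J" "finite K" "finite L"
    and disj: "I \<inter> J = {}" "K \<inter> L = {}"
    and F[measurable]: "F \<in> borel_measurable (PiM (I \<union> J) M \<Otimes>\<^sub>M PiM (K \<union> L) N)"
  shows "(\<integral>\<^sup>+z. F z \<partial>(PiM (I \<union> J) M \<Otimes>\<^sub>M PiM (K \<union> L) N)) =
    (\<integral>\<^sup>+x. \<integral>\<^sup>+u. \<integral>\<^sup>+\<sigma>. F (merge I J (x, fst \<sigma>), merge K L (u, snd \<sigma>))
       \<partial>(PiM J M \<Otimes>\<^sub>M PiM L N) \<partial>PiM K N \<partial>PiM I M)"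
proof -
  interpret JK: pair_sigma_finite "PiM J M" "PiM K N"
    using fin by (simp add: pair_sigma_finite_def product_sigma_finite.sigma_finite[OF M]
        product_sigma_finite.sigma_finite[OF N])
  interpret L: sigma_finite_measure "PiM L N"
    using fin by (intro product_sigma_finite.sigma_finite[OF N])
  note [measurable (raw)] = L.borel_measurable_nn_integral
  have [measurable]: "merge I J \<in> PiM I M \<Otimes>\<^sub>M PiM J M \<rightarrow>\<^sub>M PiM (I \<union> J) M"
    "merge K L \<in> PiM K N \<Otimes>\<^sub>M PiM L N \<rightarrow>\<^sub>M PiM (K \<union> L) N"
    by (rule measurable_merge)+
  show ?thesis
    unfolding nn_integral_pair_PiM_iterated[OF assms]
  proof (intro nn_integral_cong)
    fix x assume x: "x \<in> space (PiM I M)"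
    have "(\<integral>\<^sup>+x'. \<integral>\<^sup>+u. \<integral>\<^sup>+u'. F (merge I J (x, x'), merge K L (u, u')) \<partial>PiM L N \<partial>PiM K N \<partial>PiM J M) =
        (\<integral>\<^sup>+u. \<integral>\<^sup>+x'. \<integral>\<^sup>+u'. F (merge I J (x, x'), merge K L (u, u')) \<partial>PiM L N \<partial>PiM J M \<partial>PiM K N)"
      using x by (intro JK.Fubini'[symmetric]) measurable
    also have "\<dots> = (\<integral>\<^sup>+u. \<integral>\<^sup>+\<sigma>. F (merge I J (x, fst \<sigma>), merge K L (u, snd \<sigma>))
        \<partial>(PiM J M \<Otimes>\<^sub>M PiM L N) \<partial>PiM K N)"
    proof (intro nn_integral_cong)
      fix u assume u: "u \<in> space (PiM K N)"
      have "(\<lambda>\<sigma>. F (merge I J (x, fst \<sigma>), merge K L (u, snd \<sigma>))) \<in> borel_measurable (PiM J M \<Otimes>\<^sub>M PiM L N)"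
        using x u by measurable
      from L.nn_integral_fst[OF this]
      show "(\<integral>\<^sup>+x'. \<integral>\<^sup>+u'. F (merge I J (x, x'), merge K L (u, u')) \<partial>PiM L N \<partial>PiM J M) =
          (\<integral>\<^sup>+\<sigma>. F (merge I J (x, fst \<sigma>), merge K L (u, snd \<sigma>)) \<partial>(PiM J M \<Otimes>\<^sub>M PiM L N))"
        by simp
    qed
    finally show "(\<integral>\<^sup>+x'. \<integral>\<^sup>+u. \<integral>\<^sup>+u'. F (merge I J (x, x'), merge K L (u, u')) \<partial>PiM L N \<partial>PiM K N \<partial>PiM J M) =
        (\<integral>\<^sup>+u. \<integral>\<^sup>+\<sigma>. F (merge I J (x, fst \<sigma>), merge K L (u, snd \<sigma>))
        \<partial>(PiM J M \<Otimes>\<^sub>M PiM L N) \<partial>PiM K N)" .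
  qed
qed

section \<open>Factorisation of the Renyi integral at time \<open>t\<close>\<close>

lemma is_policy_measurable_comp:
  assumes "is_policy X U MX MU q" "f \<in> N \<rightarrow>\<^sub>M MX" "g \<in> N \<rightarrow>\<^sub>M MU"
  shows "(\<lambda>w. q (f w) (g w)) \<in> borel_measurable N"
  using measurable_compose[of "\<lambda>w. (f w, g w)" N "MX \<Otimes>\<^sub>M MU" "\<lambda>z. q (fst z) (snd z)"] assms
  by (simp add: is_policy_def)

lemma is_policy_measurable_section:
  assumes "is_policy X U MX MU q" "a \<in> space MX"
  shows "q a \<in> borel_measurable MU"
  using measurable_compose_Pair1[of a MX "\<lambda>z. q (fst z) (snd z)" MU] assms by (simp add: is_policy_def)

locale control_as_inference =
  fixes X :: "'x set" and U :: "'u set" and MX :: "'x measure" and MU :: "'u measure"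
    and T t :: nat and \<eta> :: real
    and p0 :: "'x \<Rightarrow> real" and P :: "'x \<Rightarrow> 'u \<Rightarrow> 'x \<Rightarrow> real"
    and c :: "nat \<Rightarrow> 'x \<Rightarrow> 'u \<Rightarrow> real" and cT :: "'x \<Rightarrow> real"
    and pol :: "nat \<Rightarrow> 'x \<Rightarrow> 'u \<Rightarrow> real"
  assumes space_MX[simp]: "space MX = X" and space_MU[simp]: "space MU = U"
    and sigma_finite_MX: "sigma_finite_measure MX" and sigma_finite_MU: "sigma_finite_measure MU"
    and MU_nonnull: "emeasure MU U \<noteq> 0"
    and t_less_T: "t < T"
    and p0_measurable[measurable]: "p0 \<in> borel_measurable MX"
    and p0_nonneg: "\<forall>x\<in>X. 0 \<le> p0 x"
    and P_measurable: "(\<lambda>z. P (fst z) (fst (snd z)) (snd (snd z))) \<in> borel_measurable (MX \<Otimes>\<^sub>M (MU \<Otimes>\<^sub>M MX))"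
    and P_nonneg: "\<forall>x\<in>X. \<forall>u\<in>U. \<forall>y\<in>X. 0 \<le> P x u y"
    and c_measurable: "\<forall>s<T. (\<lambda>z. c s (fst z) (snd z)) \<in> borel_measurable (MX \<Otimes>\<^sub>M MU)"
    and cT_measurable[measurable]: "cT \<in> borel_measurable MX"
    and pol_policy: "\<forall>s<T. s \<noteq> t \<longrightarrow> is_policy X U MX MU (pol s)"
    and eta_gt: "- 1 < \<eta>" and eta_ne: "\<eta> \<noteq> 0"
    and weight_pos_finite: "\<forall>a\<in>X. \<forall>b\<in>U. 0 < cond_weight MX MU P T c cT pol \<eta> t a b
                             \<and> cond_weight MX MU P T c cT pol \<eta> t a b < \<infinity>"
    and normalizer_finite: "\<forall>a\<in>X. opt_normalizer MX MU P T c cT pol \<eta> t a < \<infinity>"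
begin

abbreviation "W \<equiv> cond_weight MX MU P T c cT pol \<eta> t"
abbreviation "Z \<equiv> opt_normalizer MX MU P T c cT pol \<eta> t"
abbreviation "q_opt \<equiv> opt_factor MX MU P T c cT pol \<eta> t"

lemma t_less_T_simps[simp]: "t < T" "t \<le> T" "Suc t \<le> T" "T \<noteq> t" "t \<noteq> T"
  using t_less_T by simp_all

lemma product_sigma_finite_MX: "product_sigma_finite (\<lambda>_::nat. MX)"
  by (simp add: product_sigma_finite_def sigma_finite_MX)

lemma product_sigma_finite_MU: "product_sigma_finite (\<lambda>_::nat. MU)"
  by (simp add: product_sigma_finite_def sigma_finite_MU)

lemma sigma_finite_suffix_space: "sigma_finite_measure (suffix_space MX MU T t)"
proof -
  interpret pair_sigma_finite "PiM {Suc t..T} (\<lambda>_. MX)" "PiM {Suc t..<T} (\<lambda>_. MU)"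
    by (simp add: pair_sigma_finite_def product_sigma_finite.sigma_finite
        product_sigma_finite_MX product_sigma_finite_MU)
  show ?thesis unfolding suffix_space_def by (rule P.sigma_finite_measure_axioms)
qed

lemma measurable_suffix_space[measurable]:
  "fst \<in> suffix_space MX MU T t \<rightarrow>\<^sub>M PiM {Suc t..T} (\<lambda>_. MX)"
  "snd \<in> suffix_space MX MU T t \<rightarrow>\<^sub>M PiM {Suc t..<T} (\<lambda>_. MU)"
  by (simp_all add: suffix_space_def)

lemma measurable_traj_space[measurable]:
  "fst \<in> traj_space MX MU T \<rightarrow>\<^sub>M PiM {0..T} (\<lambda>_. MX)"
  "snd \<in> traj_space MX MU T \<rightarrow>\<^sub>M PiM {0..<T} (\<lambda>_. MU)"
  by (simp_all add: traj_space_def)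

lemma measurable_P[measurable]:
  "f \<in> N \<rightarrow>\<^sub>M MX \<Longrightarrow> g \<in> N \<rightarrow>\<^sub>M MU \<Longrightarrow> h \<in> N \<rightarrow>\<^sub>M MX \<Longrightarrow>
    (\<lambda>w. P (f w) (g w) (h w)) \<in> borel_measurable N"
  using measurable_compose[OF _ P_measurable, of "\<lambda>w. (f w, g w, h w)" N] by simp

lemma measurable_c[measurable]:
  "s < T \<Longrightarrow> f \<in> N \<rightarrow>\<^sub>M MX \<Longrightarrow> g \<in> N \<rightarrow>\<^sub>M MU \<Longrightarrow> (\<lambda>w. c s (f w) (g w)) \<in> borel_measurable N"
  using measurable_compose[OF _ c_measurable[rule_format], of "\<lambda>w. (f w, g w)" N s] by simp

lemma measurable_pol[measurable]:
  "s < T \<Longrightarrow> s \<noteq> t \<Longrightarrow> f \<in> N \<rightarrow>\<^sub>M MX \<Longrightarrow> g \<in> N \<rightarrow>\<^sub>M MU \<Longrightarrow>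
    (\<lambda>w. pol s (f w) (g w)) \<in> borel_measurable N"
  using pol_policy by (intro is_policy_measurable_comp) auto

text \<open>The trajectory with past \<open>(x\<^sub>0 .. x\<^sub>t, u\<^sub>0 .. u\<^sub>t\<^sub>-\<^sub>1)\<close>, action \<open>u\<^sub>t = b\<close> and
  future \<open>\<sigma> = (x\<^sub>t\<^sub>+\<^sub>1 .. x\<^sub>T, u\<^sub>t\<^sub>+\<^sub>1 .. u\<^sub>T\<^sub>-\<^sub>1)\<close>.\<close>
definition join :: "(nat \<Rightarrow> 'x) \<Rightarrow> (nat \<Rightarrow> 'u) \<Rightarrow> 'u \<Rightarrow> (nat \<Rightarrow> 'x) \<times> (nat \<Rightarrow> 'u) \<Rightarrow>
    (nat \<Rightarrow> 'x) \<times> (nat \<Rightarrow> 'u)" where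
  "join xp up b \<sigma> =
    (merge {0..t} {Suc t..T} (xp, fst \<sigma>), merge (insert t {0..<t}) {Suc t..<T} (up(t := b), snd \<sigma>))"

lemma join_at_t[simp]: "fst (join xp up b \<sigma>) t = xp t" "snd (join xp up b \<sigma>) t = b"
  by (simp_all add: join_def merge_def)

lemma nn_integral_traj_space_split:
  assumes F: "F \<in> borel_measurable (traj_space MX MU T)"
  shows "(\<integral>\<^sup>+\<tau>. F \<tau> \<partial>traj_space MX MU T) =
    (\<integral>\<^sup>+xp. \<integral>\<^sup>+up. \<integral>\<^sup>+b. \<integral>\<^sup>+\<sigma>. F (join xp up b \<sigma>)
      \<partial>suffix_space MX MU T t \<partial>MU \<partial>PiM {0..<t} (\<lambda>_. MU) \<partial>PiM {0..t} (\<lambda>_. MX))"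
proof -
  let ?mx = "merge {0..t} {Suc t..T}" and ?mu = "merge (insert t {0..<t}) {Suc t..<T}"
  have X_split: "{0..T} = {0..t} \<union> {Suc t..T}" and U_split: "{0..<T} = insert t {0..<t} \<union> {Suc t..<T}"
    using t_less_T by (auto simp del: t_less_T_simps)
  have F_split[measurable]: "F \<in> borel_measurable
      (PiM ({0..t} \<union> {Suc t..T}) (\<lambda>_. MX) \<Otimes>\<^sub>M PiM (insert t {0..<t} \<union> {Suc t..<T}) (\<lambda>_. MU))"
    using F unfolding traj_space_def X_split U_split .
  have [measurable]:
    "?mx \<in> PiM {0..t} (\<lambda>_. MX) \<Otimes>\<^sub>M PiM {Suc t..T} (\<lambda>_. MX) \<rightarrow>\<^sub>M PiM ({0..t} \<union> {Suc t..T}) (\<lambda>_. MX)"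
    "?mu \<in> PiM (insert t {0..<t}) (\<lambda>_. MU) \<Otimes>\<^sub>M PiM {Suc t..<T} (\<lambda>_. MU)
        \<rightarrow>\<^sub>M PiM (insert t {0..<t} \<union> {Suc t..<T}) (\<lambda>_. MU)"
    by (rule measurable_merge)+
  note [measurable (raw)] = sigma_finite_measure.borel_measurable_nn_integral[OF sigma_finite_suffix_space]
  have inner_measurable: "(\<lambda>uP. \<integral>\<^sup>+\<sigma>. F (?mx (xp, fst \<sigma>), ?mu (uP, snd \<sigma>)) \<partial>suffix_space MX MU T t)
      \<in> borel_measurable (PiM (insert t {0..<t}) (\<lambda>_. MU))" if "xp \<in> space (PiM {0..t} (\<lambda>_. MX))" for xp
    using that by measurable
  have "(\<integral>\<^sup>+\<tau>. F \<tau> \<partial>traj_space MX MU T) =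
    (\<integral>\<^sup>+xp. \<integral>\<^sup>+uP. \<integral>\<^sup>+\<sigma>. F (?mx (xp, fst \<sigma>), ?mu (uP, snd \<sigma>))
      \<partial>suffix_space MX MU T t \<partial>PiM (insert t {0..<t}) (\<lambda>_. MU) \<partial>PiM {0..t} (\<lambda>_. MX))"
    unfolding traj_space_def suffix_space_def X_split U_split
    by (rule nn_integral_pair_PiM_split[OF product_sigma_finite_MX product_sigma_finite_MU
          _ _ _ _ _ _ F_split]) auto
  also have "\<dots> = (\<integral>\<^sup>+xp. \<integral>\<^sup>+up. \<integral>\<^sup>+b. \<integral>\<^sup>+\<sigma>. F (join xp up b \<sigma>)
      \<partial>suffix_space MX MU T t \<partial>MU \<partial>PiM {0..<t} (\<lambda>_. MU) \<partial>PiM {0..t} (\<lambda>_. MX))"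
    unfolding join_def using inner_measurable
    by (intro nn_integral_cong product_sigma_finite.product_nn_integral_insert[OF product_sigma_finite_MU])
      auto
  finally show ?thesis .
qed

definition past_factor :: "(nat \<Rightarrow> 'x) \<Rightarrow> (nat \<Rightarrow> 'u) \<Rightarrow> real" where
  "past_factor x u = p0 (x 0) *
     (\<Prod>s<t. P (x s) (u s) (x (Suc s)) * pol s (x s) (u s) powr (1 + \<eta>) * exp (\<eta> * c s (x s) (u s)))"

text \<open>Unlike \<^const>\<open>cond_integrand\<close>, this form never reads the time-\<open>t\<close> coordinates of the
  trajectory, so it is measurable on the future alone and unaffected by \<^const>\<open>join\<close>.\<close>
definition future_integrand :: "'x \<Rightarrow> 'u \<Rightarrow> (nat \<Rightarrow> 'x) \<Rightarrow> (nat \<Rightarrow> 'u) \<Rightarrow> real" where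
  "future_integrand a b x u =
     P a b (x (Suc t)) * (\<Prod>s\<in>{Suc t..<T}. P (x s) (u s) (x (Suc s))) * (\<Prod>s\<in>{Suc t..<T}. pol s (x s) (u s)) *
     ((\<Prod>s\<in>{Suc t..<T}. pol s (x s) (u s)) /
       (exp (- cT (x T)) * (exp (- c t a b) * (\<Prod>s\<in>{Suc t..<T}. exp (- c s (x s) (u s)))))) powr \<eta>"

lemma cond_integrand_eq_future_integrand:
  "cond_integrand P T c cT pol \<eta> t a b \<sigma> = future_integrand a b (fst \<sigma>) (snd \<sigma>)"
proof -
  have "{t..<T} = insert t {Suc t..<T}" by auto
  moreover have "(\<Prod>s\<in>{Suc t..<T}. f s (((fst \<sigma>)(t := a)) s) (((snd \<sigma>)(t := b)) s) (((fst \<sigma>)(t := a)) (Suc s)))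
      = (\<Prod>s\<in>{Suc t..<T}. f s (fst \<sigma> s) (snd \<sigma> s) (fst \<sigma> (Suc s)))" for f :: "nat \<Rightarrow> 'x \<Rightarrow> 'u \<Rightarrow> 'x \<Rightarrow> real"
    by (rule prod.cong) auto
  ultimately show ?thesis
    unfolding cond_integrand_def future_integrand_def Let_def by simp
qed

lemma future_integrand_cong:
  assumes "\<forall>s\<in>{Suc t..T}. x s = x' s" and "\<forall>s\<in>{Suc t..<T}. u s = u' s"
  shows "future_integrand a b x u = future_integrand a b x' u'"
proof -
  have "(\<Prod>s\<in>{Suc t..<T}. P (x s) (u s) (x (Suc s))) = (\<Prod>s\<in>{Suc t..<T}. P (x' s) (u' s) (x' (Suc s)))"
    "(\<Prod>s\<in>{Suc t..<T}. pol s (x s) (u s)) = (\<Prod>s\<in>{Suc t..<T}. pol s (x' s) (u' s))"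
    "(\<Prod>s\<in>{Suc t..<T}. exp (- c s (x s) (u s))) = (\<Prod>s\<in>{Suc t..<T}. exp (- c s (x' s) (u' s)))"
    "x (Suc t) = x' (Suc t)" "x T = x' T"
    using assms by (auto intro!: prod.cong)
  then show ?thesis unfolding future_integrand_def by simp
qed

lemma past_factor_cong:
  assumes "\<forall>s\<in>{0..t}. x s = x' s" and "\<forall>s\<in>{0..<t}. u s = u' s"
  shows "past_factor x u = past_factor x' u'"
  unfolding past_factor_def using assms by (intro arg_cong2[where f = "(*)"] prod.cong) auto

lemma past_factor_join[simp]:
  "past_factor (fst (join xp up b \<sigma>)) (snd (join xp up b \<sigma>)) = past_factor xp up"
  by (rule past_factor_cong) (auto simp: join_def merge_def)

lemma future_integrand_join[simp]:
  "future_integrand a b' (fst (join xp up b \<sigma>)) (snd (join xp up b \<sigma>)) = future_integrand a b' (fst \<sigma>) (snd \<sigma>)"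
  by (rule future_integrand_cong) (auto simp: join_def merge_def)

lemma measurable_future_integrand[measurable]:
  assumes [measurable]: "a \<in> N \<rightarrow>\<^sub>M MX" "b \<in> N \<rightarrow>\<^sub>M MU"
    "x \<in> N \<rightarrow>\<^sub>M PiM I (\<lambda>_. MX)" "u \<in> N \<rightarrow>\<^sub>M PiM J (\<lambda>_. MU)"
    and I: "{Suc t..T} \<subseteq> I" and J: "{Suc t..<T} \<subseteq> J"
  shows "(\<lambda>w. future_integrand (a w) (b w) (x w) (u w)) \<in> borel_measurable N"
proof -
  have [measurable]: "(\<lambda>w. restrict (x w) {Suc t..T}) \<in> N \<rightarrow>\<^sub>M PiM {Suc t..T} (\<lambda>_. MX)"
    by (rule measurable_compose[OF _ measurable_restrict_subset[OF I]]) simp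
  have [measurable]: "(\<lambda>w. restrict (u w) {Suc t..<T}) \<in> N \<rightarrow>\<^sub>M PiM {Suc t..<T} (\<lambda>_. MU)"
    by (rule measurable_compose[OF _ measurable_restrict_subset[OF J]]) simp
  have "(\<lambda>w. future_integrand (a w) (b w) (restrict (x w) {Suc t..T}) (restrict (u w) {Suc t..<T}))
      \<in> borel_measurable N"
    unfolding future_integrand_def by measurable
  moreover have "future_integrand a' b' (restrict x' {Suc t..T}) (restrict u' {Suc t..<T})
      = future_integrand a' b' x' u'" for a' b' x' u'
    by (rule future_integrand_cong) simp_all
  ultimately show ?thesis by simp
qed

lemma measurable_past_factor[measurable]:
  assumes [measurable]: "x \<in> N \<rightarrow>\<^sub>M PiM {0..T} (\<lambda>_. MX)" "u \<in> N \<rightarrow>\<^sub>M PiM {0..<T} (\<lambda>_. MU)"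
  shows "(\<lambda>w. past_factor (x w) (u w)) \<in> borel_measurable N"
proof -
  have [simp]: "s < t \<Longrightarrow> s \<le> T" "s < t \<Longrightarrow> Suc s \<le> T" "s < t \<Longrightarrow> s < T" "s < t \<Longrightarrow> s \<noteq> t" for s
    using t_less_T by linarith+
  show ?thesis unfolding past_factor_def by measurable
qed

lemma past_factor_nonneg:
  assumes "\<forall>s\<le>t. x s \<in> X" "\<forall>s<t. u s \<in> U"
  shows "0 \<le> past_factor x u"
  unfolding past_factor_def using assms p0_nonneg P_nonneg
  by (intro mult_nonneg_nonneg prod_nonneg) auto

lemma future_integrand_tilted:
  assumes x: "\<forall>s\<in>{Suc t..<T}. x s \<in> X" and u: "\<forall>s\<in>{Suc t..<T}. u s \<in> U"
  shows "future_integrand a b x u =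
    P a b (x (Suc t)) * (\<Prod>s\<in>{Suc t..<T}. P (x s) (u s) (x (Suc s))) *
    ((\<Prod>s\<in>{Suc t..<T}. pol s (x s) (u s) powr (1 + \<eta>)) *
     exp (\<eta> * (cT (x T) + c t a b + (\<Sum>s\<in>{Suc t..<T}. c s (x s) (u s)))))"
proof -
  define B where "B = (\<Prod>s\<in>{Suc t..<T}. pol s (x s) (u s))"
  define K where "K = cT (x T) + c t a b + (\<Sum>s\<in>{Suc t..<T}. c s (x s) (u s))"
  have pol_nonneg: "\<forall>s\<in>{Suc t..<T}. 0 \<le> pol s (x s) (u s)"
    using x u pol_policy by (auto simp: is_policy_def)
  then have "0 \<le> B" unfolding B_def by (intro prod_nonneg) auto
  have "exp (- cT (x T)) * (exp (- c t a b) * (\<Prod>s\<in>{Suc t..<T}. exp (- c s (x s) (u s)))) = exp (- K)"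
    by (simp add: K_def exp_sum[symmetric] sum_negf exp_add[symmetric])
  then have "future_integrand a b x u =
      P a b (x (Suc t)) * (\<Prod>s\<in>{Suc t..<T}. P (x s) (u s) (x (Suc s))) * (B * (B / exp (- K)) powr \<eta>)"
    unfolding future_integrand_def B_def by (simp add: mult.assoc)
  moreover have "B * (B / exp (- K)) powr \<eta> = B powr (1 + \<eta>) * exp (\<eta> * K)"
    using \<open>0 \<le> B\<close> by (simp add: powr_add powr_divide powr_mult exp_powr_real exp_minus field_simps)
  moreover have "B powr (1 + \<eta>) = (\<Prod>s\<in>{Suc t..<T}. pol s (x s) (u s) powr (1 + \<eta>))"
    unfolding B_def using pol_nonneg by (simp add: prod_powr_distrib)
  ultimately show ?thesis by (simp add: K_def)
qed

lemma past_future_factorization: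
  assumes x: "\<forall>s\<le>T. x s \<in> X" and u: "\<forall>s<T. u s \<in> U"
  shows "p0 (x 0) * (\<Prod>s<T. P (x s) (u s) (x (Suc s))) * (\<Prod>s<T. (pol(t := q)) s (x s) (u s) powr (1 + \<eta>)) *
      exp (\<eta> * (cT (x T) + (\<Sum>s<T. c s (x s) (u s))))
    = past_factor x u * q (x t) (u t) powr (1 + \<eta>) * future_integrand (x t) (u t) x u"
proof -
  define Q where "Q s = (pol(t := q)) s (x s) (u s) powr (1 + \<eta>)" for s
  define C where "C s = c s (x s) (u s)" for s
  define Pf where "Pf s = P (x s) (u s) (x (Suc s))" for s
  have "(\<Prod>s\<in>{Suc t..<T}. pol s (x s) (u s) powr (1 + \<eta>)) = (\<Prod>s\<in>{Suc t..<T}. Q s)"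
    unfolding Q_def by (rule prod.cong) auto
  then have future: "future_integrand (x t) (u t) x u =
      Pf t * (\<Prod>s\<in>{Suc t..<T}. Pf s) * ((\<Prod>s\<in>{Suc t..<T}. Q s) * exp (\<eta> * (cT (x T) + C t + (\<Sum>s\<in>{Suc t..<T}. C s))))"
    using future_integrand_tilted[of x u "x t" "u t"] x u by (simp add: Pf_def C_def)
  have past: "past_factor x u = p0 (x 0) * (\<Prod>s<t. Pf s) * (\<Prod>s<t. Q s) * exp (\<eta> * (\<Sum>s<t. C s))"
    unfolding past_factor_def by (simp add: Pf_def Q_def C_def prod.distrib exp_sum sum_distrib_left)
  show ?thesis
    unfolding future past Pf_def[symmetric] Q_def[symmetric] C_def[symmetric]
      prod_lessThan_split_at[OF t_less_T, of Pf] prod_lessThan_split_at[OF t_less_T, of Q]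
      sum_lessThan_split_at[OF t_less_T, of C]
    by (simp add: Q_def distrib_left exp_add algebra_simps)
qed

definition evidence :: real where
  "evidence = enn2real (\<integral>\<^sup>+\<sigma>. ennreal (post_unnorm p0 P T c cT \<sigma>) \<partial>traj_space MX MU T)"

definition renyi_integrand :: "('x \<Rightarrow> 'u \<Rightarrow> real) \<Rightarrow> (nat \<Rightarrow> 'x) \<times> (nat \<Rightarrow> 'u) \<Rightarrow> ennreal" where
  "renyi_integrand q \<tau> =
     indicator {z. traj_dens p0 P T (pol(t := q)) z * posterior MX MU p0 P T c cT z > 0} \<tau> *
     ennreal (traj_dens p0 P T (pol(t := q)) \<tau> powr (1 + \<eta>) *
              posterior MX MU p0 P T c cT \<tau> powr (1 - (1 + \<eta>)))"

definition factored_integrand :: "('x \<Rightarrow> 'u \<Rightarrow> real) \<Rightarrow> (nat \<Rightarrow> 'x) \<times> (nat \<Rightarrow> 'u) \<Rightarrow> ennreal" where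
  "factored_integrand q \<tau> = ennreal (evidence powr \<eta> *
     (past_factor (fst \<tau>) (snd \<tau>) * q (fst \<tau> t) (snd \<tau> t) powr (1 + \<eta>) *
      future_integrand (fst \<tau> t) (snd \<tau> t) (fst \<tau>) (snd \<tau>)))"

lemma renyi_div_eq_renyi_integrand:
  "renyi_div (traj_space MX MU T) (1 + \<eta>) (traj_dens p0 P T (pol(t := q))) (posterior MX MU p0 P T c cT)
     = ereal (1 / \<eta>) * elog (\<integral>\<^sup>+\<tau>. renyi_integrand q \<tau> \<partial>traj_space MX MU T)"
  unfolding renyi_div_def renyi_integrand_def by simp

text \<open>If the posterior cannot be normalised, division by zero makes it the zero function.\<close>
lemma renyi_integrand_evidence_zero: "evidence = 0 \<Longrightarrow> renyi_integrand q \<tau> = 0"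
  unfolding renyi_integrand_def posterior_def evidence_def[symmetric] by simp

lemma renyi_integrand_factorization:
  assumes x: "\<forall>s\<le>T. x s \<in> X" and u: "\<forall>s<T. u s \<in> U"
    and q_nonneg: "\<forall>a\<in>X. \<forall>b\<in>U. 0 \<le> q a b" and evidence_pos: "0 < evidence"
  shows "renyi_integrand q (x, u) = factored_integrand q (x, u)"
proof -
  define A where "A = p0 (x 0) * (\<Prod>s<T. P (x s) (u s) (x (Suc s)))"
  define B where "B = (\<Prod>s<T. (pol(t := q)) s (x s) (u s))"
  define E where "E = - cT (x T) - (\<Sum>s<T. c s (x s) (u s))"
  have Q_nonneg: "0 \<le> (pol(t := q)) s (x s) (u s)" if "s < T" for s
    using x u q_nonneg pol_policy that by (cases "s = t") (auto simp: is_policy_def)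
  have A: "0 \<le> A"
    using x u p0_nonneg P_nonneg by (auto simp: A_def intro!: mult_nonneg_nonneg prod_nonneg)
  have B: "0 \<le> B"
    using Q_nonneg by (auto simp: B_def intro!: prod_nonneg)
  have dens: "traj_dens p0 P T (pol(t := q)) (x, u) = A * B"
    by (simp add: traj_dens_def A_def B_def prod.distrib)
  have post: "posterior MX MU p0 P T c cT (x, u) = A * exp E / evidence"
    unfolding posterior_def evidence_def[symmetric] by (simp add: post_unnorm_def A_def E_def)
  have "A * B powr (1 + \<eta>) * exp (- \<eta> * E)
      = past_factor x u * q (x t) (u t) powr (1 + \<eta>) * future_integrand (x t) (u t) x u"
    using past_future_factorization[OF x u, of q] Q_nonneg
    by (simp add: A_def B_def E_def prod_powr_distrib algebra_simps)
  then have "(A * B) powr (1 + \<eta>) * (A * exp E / evidence) powr (1 - (1 + \<eta>)) =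
      evidence powr \<eta> * (past_factor x u * q (x t) (u t) powr (1 + \<eta>) * future_integrand (x t) (u t) x u)"
    using powr_shared_factor_cancel[OF A B evidence_pos, where E = E and \<eta> = \<eta>] by simp
  moreover have "0 < A * B * (A * exp E / evidence) \<or> A * B = 0 \<or> A * exp E / evidence = 0"
    using A B evidence_pos by (auto simp: less_le)
  ultimately show ?thesis
    unfolding renyi_integrand_def factored_integrand_def by (auto simp: indicator_def dens post)
qed

lemma nn_integral_renyi_integrand_factored:
  assumes q: "is_policy X U MX MU q" and evidence_pos: "0 < evidence"
  shows "(\<integral>\<^sup>+\<tau>. renyi_integrand q \<tau> \<partial>traj_space MX MU T) = (\<integral>\<^sup>+\<tau>. factored_integrand q \<tau> \<partial>traj_space MX MU T)"
proof (rule nn_integral_cong)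
  fix \<tau> assume "\<tau> \<in> space (traj_space MX MU T)"
  then obtain x u where "\<tau> = (x, u)" "\<forall>s\<le>T. x s \<in> X" "\<forall>s<T. u s \<in> U"
    by (cases \<tau>) (auto simp: traj_space_def space_pair_measure space_PiM PiE_iff)
  then show "renyi_integrand q \<tau> = factored_integrand q \<tau>"
    using renyi_integrand_factorization q evidence_pos by (simp add: is_policy_def)
qed

lemma W_eq_future_integral:
  "W a b = (\<integral>\<^sup>+\<sigma>. ennreal (future_integrand a b (fst \<sigma>) (snd \<sigma>)) \<partial>suffix_space MX MU T t)"
  unfolding cond_weight_def cond_integrand_eq_future_integrand ..

lemma measurable_W[measurable]: "(\<lambda>z. W (fst z) (snd z)) \<in> borel_measurable (MX \<Otimes>\<^sub>M MU)"
proof -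
  note [measurable (raw)] = sigma_finite_measure.borel_measurable_nn_integral[OF sigma_finite_suffix_space]
  show ?thesis unfolding W_eq_future_integral by measurable
qed

definition weight :: "'x \<Rightarrow> 'u \<Rightarrow> real" where
  "weight a b = enn2real (W a b)"

lemma W_eq_weight: "a \<in> X \<Longrightarrow> b \<in> U \<Longrightarrow> W a b = ennreal (weight a b)"
  using weight_pos_finite by (simp add: weight_def less_top)

lemma weight_pos: "a \<in> X \<Longrightarrow> b \<in> U \<Longrightarrow> 0 < weight a b"
  using weight_pos_finite by (simp add: weight_def enn2real_positive_iff less_top)

lemma measurable_weight[measurable]: "(\<lambda>z. weight (fst z) (snd z)) \<in> borel_measurable (MX \<Otimes>\<^sub>M MU)"
  unfolding weight_def by measurable

lemma measurable_weight_section[measurable]: "a \<in> X \<Longrightarrow> weight a \<in> borel_measurable MU"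
  using measurable_compose_Pair1[OF _ measurable_weight, of a] by simp

lemma nn_integral_factored_join:
  assumes q: "is_policy X U MX MU q" and xp: "xp \<in> space (PiM {0..t} (\<lambda>_. MX))"
    and up: "up \<in> space (PiM {0..<t} (\<lambda>_. MU))" and b: "b \<in> U"
  shows "(\<integral>\<^sup>+\<sigma>. factored_integrand q (join xp up b \<sigma>) \<partial>suffix_space MX MU T t) =
    ennreal (evidence powr \<eta> * past_factor xp up) * ennreal (q (xp t) b powr (1 + \<eta>) * weight (xp t) b)"
proof -
  have a: "xp t \<in> X" and past: "0 \<le> past_factor xp up"
    using xp up by (auto simp: space_PiM PiE_iff intro!: past_factor_nonneg)
  define K where "K = evidence powr \<eta> * past_factor xp up * q (xp t) b powr (1 + \<eta>)"
  have "(\<integral>\<^sup>+\<sigma>. factored_integrand q (join xp up b \<sigma>) \<partial>suffix_space MX MU T t)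
      = (\<integral>\<^sup>+\<sigma>. ennreal K * ennreal (future_integrand (xp t) b (fst \<sigma>) (snd \<sigma>)) \<partial>suffix_space MX MU T t)"
    using past by (intro nn_integral_cong)
      (simp add: factored_integrand_def K_def ennreal_mult'[symmetric] mult.assoc)
  also have "\<dots> = ennreal K * W (xp t) b"
    unfolding W_eq_future_integral using a b by (intro nn_integral_cmult) measurable
  finally show ?thesis
    using past a b by (simp add: K_def W_eq_weight weight_pos ennreal_mult'[symmetric] less_imp_le mult.assoc)
qed

definition action_cost :: "('x \<Rightarrow> 'u \<Rightarrow> real) \<Rightarrow> 'x \<Rightarrow> ennreal" where
  "action_cost q a = (\<integral>\<^sup>+b. ennreal (q a b powr (1 + \<eta>) * weight a b) \<partial>MU)"

lemma renyi_integral_split: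
  assumes q: "is_policy X U MX MU q" and evidence_pos: "0 < evidence"
  shows "(\<integral>\<^sup>+\<tau>. renyi_integrand q \<tau> \<partial>traj_space MX MU T) =
    (\<integral>\<^sup>+xp. \<integral>\<^sup>+up. ennreal (evidence powr \<eta> * past_factor xp up) * action_cost q (xp t)
       \<partial>PiM {0..<t} (\<lambda>_. MU) \<partial>PiM {0..t} (\<lambda>_. MX))"
proof -
  note [measurable] = is_policy_measurable_comp[OF q]
  have "factored_integrand q \<in> borel_measurable (traj_space MX MU T)"
    unfolding factored_integrand_def by measurable
  then have "(\<integral>\<^sup>+\<tau>. renyi_integrand q \<tau> \<partial>traj_space MX MU T) =
    (\<integral>\<^sup>+xp. \<integral>\<^sup>+up. \<integral>\<^sup>+b. \<integral>\<^sup>+\<sigma>. factored_integrand q (join xp up b \<sigma>)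
      \<partial>suffix_space MX MU T t \<partial>MU \<partial>PiM {0..<t} (\<lambda>_. MU) \<partial>PiM {0..t} (\<lambda>_. MX))"
    unfolding nn_integral_renyi_integrand_factored[OF q evidence_pos] by (rule nn_integral_traj_space_split)
  also have "\<dots> = (\<integral>\<^sup>+xp. \<integral>\<^sup>+up. \<integral>\<^sup>+b. ennreal (evidence powr \<eta> * past_factor xp up) *
      ennreal (q (xp t) b powr (1 + \<eta>) * weight (xp t) b) \<partial>MU \<partial>PiM {0..<t} (\<lambda>_. MU) \<partial>PiM {0..t} (\<lambda>_. MX))"
    using q by (intro nn_integral_cong nn_integral_factored_join) simp_all
  also have "\<dots> = (\<integral>\<^sup>+xp. \<integral>\<^sup>+up. ennreal (evidence powr \<eta> * past_factor xp up) * action_cost q (xp t)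
       \<partial>PiM {0..<t} (\<lambda>_. MU) \<partial>PiM {0..t} (\<lambda>_. MX))"
  proof (intro nn_integral_cong)
    fix xp up assume "xp \<in> space (PiM {0..t} (\<lambda>_. MX))"
    then have "xp t \<in> X" by (auto simp: space_PiM PiE_iff)
    then show "(\<integral>\<^sup>+b. ennreal (evidence powr \<eta> * past_factor xp up) *
        ennreal (q (xp t) b powr (1 + \<eta>) * weight (xp t) b) \<partial>MU)
        = ennreal (evidence powr \<eta> * past_factor xp up) * action_cost q (xp t)"
      unfolding action_cost_def by (intro nn_integral_cmult) measurable
  qed
  finally show ?thesis .
qed

section \<open>The optimal factor\<close>

lemma opt_unnorm_eq: "opt_unnorm MX MU P T c cT pol \<eta> t a b = weight a b powr (- 1 / \<eta>)"
  unfolding opt_unnorm_def weight_def ..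

lemma opt_factor_eq: "q_opt a b = weight a b powr (- 1 / \<eta>) / enn2real (Z a)"
  unfolding opt_factor_def opt_unnorm_eq ..

lemma normalizer_pos_finite:
  assumes a: "a \<in> X"
  shows "0 < enn2real (Z a)" and "Z a = ennreal (enn2real (Z a))"
proof -
  have "(\<lambda>b. ennreal (opt_unnorm MX MU P T c cT pol \<eta> t a b)) \<in> borel_measurable MU"
    using a unfolding opt_unnorm_eq by measurable
  moreover have "\<forall>b\<in>space MU. 0 < ennreal (opt_unnorm MX MU P T c cT pol \<eta> t a b)"
  proof
    fix b assume "b \<in> space MU"
    then have "0 < weight a b" using a weight_pos by simp
    then show "0 < ennreal (opt_unnorm MX MU P T c cT pol \<eta> t a b)" by (simp add: opt_unnorm_eq)
  qed
  ultimately have "0 < Z a"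
    unfolding opt_normalizer_def using MU_nonnull by (intro nn_integral_pos_of_pos) simp_all
  then show "0 < enn2real (Z a)" and "Z a = ennreal (enn2real (Z a))"
    using normalizer_finite a by (simp_all add: enn2real_positive_iff less_top)
qed

lemma opt_factor_policy: "is_policy X U MX MU q_opt"
  unfolding is_policy_def
proof (intro conjI ballI)
  have [measurable]: "Z \<in> borel_measurable MX"
  proof -
    note [measurable (raw)] = sigma_finite_measure.borel_measurable_nn_integral[OF sigma_finite_MU]
    show ?thesis unfolding opt_normalizer_def[abs_def] opt_unnorm_eq by measurable
  qed
  show "(\<lambda>z. q_opt (fst z) (snd z)) \<in> borel_measurable (MX \<Otimes>\<^sub>M MU)"
    unfolding opt_factor_eq by measurable
next
  fix a b assume "a \<in> X" "b \<in> U"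
  show "0 \<le> q_opt a b" unfolding opt_factor_eq by simp
next
  fix a assume a: "a \<in> X"
  define n where "n = enn2real (Z a)"
  have n: "0 < n" "Z a = ennreal n"
    using normalizer_pos_finite[OF a] by (simp_all add: n_def)
  have "(\<integral>\<^sup>+b. ennreal (q_opt a b) \<partial>MU)
      = (\<integral>\<^sup>+b. ennreal (opt_unnorm MX MU P T c cT pol \<eta> t a b) * ennreal (1 / n) \<partial>MU)"
    unfolding opt_factor_def n_def[symmetric] using n
    by (intro nn_integral_cong) (simp add: ennreal_mult[symmetric] opt_unnorm_def)
  also have "\<dots> = Z a * ennreal (1 / n)"
    using a unfolding opt_normalizer_def opt_unnorm_eq by (intro nn_integral_multc) measurable
  finally show "(\<integral>\<^sup>+b. ennreal (q_opt a b) \<partial>MU) = 1"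
    using n by (simp add: ennreal_mult[symmetric])
qed

lemma opt_factor_pos:
  assumes "a \<in> X" "b \<in> U"
  shows "0 < q_opt a b"
  unfolding opt_factor_eq using weight_pos[OF assms] normalizer_pos_finite(1)[OF assms(1)] by simp

lemma opt_factor_balanced:
  assumes "a \<in> X" "b \<in> U"
  shows "q_opt a b powr \<eta> * weight a b = 1 / enn2real (Z a) powr \<eta>"
proof -
  have "(weight a b powr (- 1 / \<eta>)) powr \<eta> = 1 / weight a b"
    unfolding powr_powr using weight_pos[OF assms] eta_ne by (simp add: powr_minus_divide)
  then show ?thesis
    using weight_pos[OF assms] normalizer_pos_finite(1)[OF assms(1)] by (simp add: opt_factor_eq powr_divide)
qed

lemma action_cost_opt_factor:
  assumes a: "a \<in> X" and \<pi>: "is_policy X U MX MU \<pi>"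
  shows "0 < \<eta> \<Longrightarrow> action_cost q_opt a \<le> action_cost \<pi> a"
    and "\<eta> < 0 \<Longrightarrow> action_cost \<pi> a \<le> action_cost q_opt a"
proof -
  have [measurable]: "\<pi> a \<in> borel_measurable MU" "q_opt a \<in> borel_measurable MU"
    using a is_policy_measurable_section[OF \<pi>] is_policy_measurable_section[OF opt_factor_policy]
    by simp_all
  note facts = a \<pi> opt_factor_policy weight_pos opt_factor_pos opt_factor_balanced eta_gt
  show "action_cost q_opt a \<le> action_cost \<pi> a" if "0 < \<eta>"
    unfolding action_cost_def using facts that
    by (intro powr_weight_integral_convex_min) (auto simp: is_policy_def less_imp_le)
  show "action_cost \<pi> a \<le> action_cost q_opt a" if "\<eta> < 0"
    unfolding action_cost_def using facts that
    by (intro powr_weight_integral_concave_max) (auto simp: is_policy_def less_imp_le)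
qed

lemma renyi_integral_opt_factor:
  assumes \<pi>: "is_policy X U MX MU \<pi>" and evidence_pos: "0 < evidence"
  shows "0 < \<eta> \<Longrightarrow>
      (\<integral>\<^sup>+\<tau>. renyi_integrand q_opt \<tau> \<partial>traj_space MX MU T) \<le> (\<integral>\<^sup>+\<tau>. renyi_integrand \<pi> \<tau> \<partial>traj_space MX MU T)"
    and "\<eta> < 0 \<Longrightarrow>
      (\<integral>\<^sup>+\<tau>. renyi_integrand \<pi> \<tau> \<partial>traj_space MX MU T) \<le> (\<integral>\<^sup>+\<tau>. renyi_integrand q_opt \<tau> \<partial>traj_space MX MU T)"
  unfolding renyi_integral_split[OF \<pi> evidence_pos] renyi_integral_split[OF opt_factor_policy evidence_pos]
  using action_cost_opt_factor[OF _ \<pi>]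
  by (auto intro!: nn_integral_mono mult_left_mono simp: space_PiM PiE_iff)

theorem opt_factor_minimizes_renyi_div:
  assumes \<pi>: "is_policy X U MX MU \<pi>"
  shows "renyi_div (traj_space MX MU T) (1 + \<eta>) (traj_dens p0 P T (pol(t := q_opt))) (posterior MX MU p0 P T c cT)
       \<le> renyi_div (traj_space MX MU T) (1 + \<eta>) (traj_dens p0 P T (pol(t := \<pi>))) (posterior MX MU p0 P T c cT)"
proof (cases "evidence = 0")
  case True
  then show ?thesis by (simp add: renyi_div_eq_renyi_integrand renyi_integrand_evidence_zero)
next
  case False
  then have "0 < evidence" by (simp add: evidence_def less_le)
  then show ?thesis
    unfolding renyi_div_eq_renyi_integrand using renyi_integral_opt_factor[OF \<pi>] eta_ne
    by (intro elog_scaled_le) auto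
qed

end

theorem proposition3:
  fixes X :: "'x::euclidean_space set" and U :: "'u::euclidean_space set"
    and T t :: nat and \<eta> :: real
    and p0 :: "'x \<Rightarrow> real" and P :: "'x \<Rightarrow> 'u \<Rightarrow> 'x \<Rightarrow> real"
    and c :: "nat \<Rightarrow> 'x \<Rightarrow> 'u \<Rightarrow> real" and cT :: "'x \<Rightarrow> real"
    and pol :: "nat \<Rightarrow> 'x \<Rightarrow> 'u \<Rightarrow> real"
  defines "MX \<equiv> restrict_space lborel X" and "MU \<equiv> restrict_space lborel U"
  assumes X_meas: "X \<in> sets lborel" and U_meas: "U \<in> sets lborel"
    and U_pos: "0 < emeasure lborel U" and U_fin: "emeasure lborel U < \<infinity>"
    and T_pos: "0 < T" and t_lt: "t < T"
    and p0_meas: "p0 \<in> borel_measurable MX"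
    and p0_nonneg: "\<forall>x\<in>X. 0 \<le> p0 x"
    and p0_dens: "(\<integral>\<^sup>+ x. ennreal (p0 x) \<partial>MX) = 1"
    and P_meas: "(\<lambda>z. P (fst z) (fst (snd z)) (snd (snd z))) \<in> borel_measurable (MX \<Otimes>\<^sub>M (MU \<Otimes>\<^sub>M MX))"
    and P_nonneg: "\<forall>x\<in>X. \<forall>u\<in>U. \<forall>y\<in>X. 0 \<le> P x u y"
    and P_dens: "\<forall>x\<in>X. \<forall>u\<in>U. (\<integral>\<^sup>+ y. ennreal (P x u y) \<partial>MX) = 1"
    and c_meas: "\<forall>s<T. (\<lambda>z. c s (fst z) (snd z)) \<in> borel_measurable (MX \<Otimes>\<^sub>M MU)"
    and c_nonneg: "\<forall>s<T. \<forall>x\<in>X. \<forall>u\<in>U. 0 \<le> c s x u"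
    and cT_meas: "cT \<in> borel_measurable MX"
    and cT_nonneg: "\<forall>x\<in>X. 0 \<le> cT x"
    and pol_policy: "\<forall>s<T. s \<noteq> t \<longrightarrow> is_policy X U MX MU (pol s)"
    and eta_gt: "\<eta> > -1" and eta_ne: "\<eta> \<noteq> 0"
    and W_wd: "\<forall>a\<in>X. \<forall>b\<in>U. 0 < cond_weight MX MU P T c cT pol \<eta> t a b
                             \<and> cond_weight MX MU P T c cT pol \<eta> t a b < \<infinity>"
    and Z_wd: "\<forall>a\<in>X. opt_normalizer MX MU P T c cT pol \<eta> t a < \<infinity>"
  shows "is_policy X U MX MU (opt_factor MX MU P T c cT pol \<eta> t) \<and>
         (\<forall>\<pi>. is_policy X U MX MU \<pi> \<longrightarrow>
            renyi_div (traj_space MX MU T) (1 + \<eta>)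
               (traj_dens p0 P T (pol(t := opt_factor MX MU P T c cT pol \<eta> t)))
               (posterior MX MU p0 P T c cT)
            \<le> renyi_div (traj_space MX MU T) (1 + \<eta>)
               (traj_dens p0 P T (pol(t := \<pi>)))
               (posterior MX MU p0 P T c cT))"
proof -
  interpret control_as_inference X U MX MU T t \<eta> p0 P c cT pol
  proof (rule control_as_inference.intro)
    show "space MX = X" "space MU = U"
      by (simp_all add: MX_def MU_def space_restrict_space)
    show "sigma_finite_measure MX" "sigma_finite_measure MU"
      unfolding MX_def MU_def using X_meas U_meas
      by (simp_all add: sigma_finite_measure_restrict_space lborel.sigma_finite_measure_axioms)
    show "emeasure MU U \<noteq> 0"
      using U_meas U_pos by (simp add: MU_def emeasure_restrict_space)
  qed (use t_lt p0_meas p0_nonneg P_meas P_nonneg c_meas cT_meas pol_policy eta_gt eta_ne W_wd Z_wd in auto)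
  show ?thesis
    using opt_factor_policy opt_factor_minimizes_renyi_div by blast
qed

end
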